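(* If $F=\{f_i\}_{i=1}^N$ is an equal norm tight frame for $\mathcal H$ and $G$ is a dual of $F$ such that $(F,G)\in\mathcal F^{(1)}$, then $G=S_F^{-1}F$.
   Context: $\mathcal H$ is a complex Hilbert space of finite dimension $n$, inner product linear in the first argument. A finite sequence $F=\{f_i\}_{i=1}^N$ is a frame if there are $0<A\le B$ with $A\|f\|^2\le\sum_{i}|\langle f,f_i\rangle|^2\le B\|f\|^2$ for all $f$; tight if one can take $A=B$; equal norm if $\|f_i\|$ is constant. $S_Ff=\sum_i\langle f,f_i\rangle f_i$ is the frame operator and $S_F^{-1}F=\{S_F^{-1}f_i\}_{i=1}^N$ the canonical dual. $G=\{g_i\}_{i=1}^N$ is a dual of $F$ if $f=\sum_i\langle f,g_i\rangle f_i$ for all $f$; $(F,G)$ is then an $(N,n)$ dual pair. The error operator for $\Lambda\subseteq\{1,\dots,N\}$ is $E_{\Lambda,F,G}f=\sum_{i\in\Lambda}\langle f,f_i\rangle g_i$. With $\|T\|_{\mathcal F}=\sqrt{\operatorname{tr}(T^*T)}$, $\epsilon^{(1)}_{F,G}=\max_{1\le i\le N}\|E_{\{i\},F,G}\|_{\mathcal F}$, $\epsilon^{(1)}=\inf\{\epsilon^{(1)}_{F,G}:(F,G)\text{ an }(N,n)\text{ dual pair}\}$, $\mathcal F^{(1)}=\{(F,G):\epsilon^{(1)}_{F,G}=\epsilon^{(1)}\}$. *)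

theory Defs
  imports "HOL-Analysis.Analysis"
begin

text \<open>The n-dimensional complex Hilbert space is modelled as complex^'n (n = CARD('n)),
  with inner product linear in the first argument. Finite sequences {f_i}, i=1..N, are
  modelled as functions from a finite index type 'i (N = CARD('i)).\<close>

definition cinner :: "complex^'n \<Rightarrow> complex^'n \<Rightarrow> complex" where
  "cinner f g = (\<Sum>k\<in>UNIV. f$k * cnj (g$k))"

definition is_frame :: "('i::finite \<Rightarrow> complex^'n) \<Rightarrow> bool" where
  "is_frame F \<longleftrightarrow> (\<exists>A B. 0 < A \<and> A \<le> B \<and>
     (\<forall>f. A * (norm f)^2 \<le> (\<Sum>i\<in>UNIV. (cmod (cinner f (F i)))^2) \<and>
          (\<Sum>i\<in>UNIV. (cmod (cinner f (F i)))^2) \<le> B * (norm f)^2))"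

definition tight_frame :: "('i::finite \<Rightarrow> complex^'n) \<Rightarrow> bool" where
  "tight_frame F \<longleftrightarrow> (\<exists>A. 0 < A \<and>
     (\<forall>f. (\<Sum>i\<in>UNIV. (cmod (cinner f (F i)))^2) = A * (norm f)^2))"

definition equal_norm :: "('i::finite \<Rightarrow> complex^'n) \<Rightarrow> bool" where
  "equal_norm F \<longleftrightarrow> (\<forall>i j. norm (F i) = norm (F j))"

definition frame_op :: "('i::finite \<Rightarrow> complex^'n) \<Rightarrow> complex^'n \<Rightarrow> complex^'n" where
  "frame_op F f = (\<Sum>i\<in>UNIV. cinner f (F i) *s F i)"

definition canonical_dual :: "('i::finite \<Rightarrow> complex^'n) \<Rightarrow> 'i \<Rightarrow> complex^'n" where
  "canonical_dual F = (\<lambda>i. inv (frame_op F) (F i))"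

definition is_dual :: "('i::finite \<Rightarrow> complex^'n) \<Rightarrow> ('i \<Rightarrow> complex^'n) \<Rightarrow> bool" where
  "is_dual F G \<longleftrightarrow> (\<forall>f. f = (\<Sum>i\<in>UNIV. cinner f (G i) *s F i))"

definition dual_pair :: "('i::finite \<Rightarrow> complex^'n) \<Rightarrow> ('i \<Rightarrow> complex^'n) \<Rightarrow> bool" where
  "dual_pair F G \<longleftrightarrow> is_frame F \<and> is_dual F G"

definition error_op :: "'i set \<Rightarrow> ('i::finite \<Rightarrow> complex^'n) \<Rightarrow> ('i \<Rightarrow> complex^'n)
    \<Rightarrow> complex^'n \<Rightarrow> complex^'n" where
  "error_op \<Lambda> F G f = (\<Sum>i\<in>\<Lambda>. cinner f (F i) *s G i)"

definition cadj :: "complex^'n^'m \<Rightarrow> complex^'m^'n" where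
  "cadj M = (\<chi> i j. cnj (M$j$i))"

definition frob_norm :: "(complex^'n \<Rightarrow> complex^'n) \<Rightarrow> real" where
  "frob_norm T = sqrt (Re (trace (cadj (matrix T) ** matrix T)))"

definition eps1 :: "('i::finite \<Rightarrow> complex^'n) \<Rightarrow> ('i \<Rightarrow> complex^'n) \<Rightarrow> real" where
  "eps1 F G = Max (range (\<lambda>i. frob_norm (error_op {i} F G)))"

definition eps1_opt :: "'i::finite itself \<Rightarrow> 'n::finite itself \<Rightarrow> real" where
  "eps1_opt _ _ = Inf {eps1 F G | (F :: 'i \<Rightarrow> complex^'n) (G :: 'i \<Rightarrow> complex^'n). dual_pair F G}"

definition in_F1 :: "('i::finite \<Rightarrow> complex^'n) \<Rightarrow> ('i \<Rightarrow> complex^'n) \<Rightarrow> bool" where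
  "in_F1 F G \<longleftrightarrow> dual_pair F G \<and> eps1 F G = eps1_opt TYPE('i) TYPE('n)"

end

theory Submission
  imports Defs
begin

text \<open>A tight frame with bound A has frame operator A I, so its canonical dual is F/A. For any
  dual G, the difference h = G - F/A satisfies \<Sum>i \<langle>f,h_i\<rangle> f_i = 0, whose trace
  \<Sum>i \<langle>f_i,h_i\<rangle> vanishes; hence \<Sum>i \<parallel>g_i\<parallel>^2 = \<Sum>i \<parallel>f_i/A\<parallel>^2 + \<Sum>i \<parallel>h_i\<parallel>^2.
  Since \<parallel>E_{i}\<parallel> = \<parallel>f_i\<parallel> \<parallel>g_i\<parallel> and all \<parallel>f_i\<parallel> are equal, optimality of (F,G) compared with
  the dual pair (F, F/A) forces \<parallel>g_i\<parallel> \<le> \<parallel>f_i/A\<parallel> for every i, so h = 0.\<close>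

lemma cinner_add_left: "cinner (x + y) z = cinner x z + cinner y z"
  by (simp add: cinner_def distrib_right sum.distrib)

lemma cinner_add_right: "cinner x (y + z) = cinner x y + cinner x z"
  by (simp add: cinner_def distrib_left sum.distrib)

lemma cinner_diff_left: "cinner (x - y) z = cinner x z - cinner y z"
  by (simp add: cinner_def left_diff_distrib sum_subtractf)

lemma cinner_diff_right: "cinner x (y - z) = cinner x y - cinner x z"
  by (simp add: cinner_def right_diff_distrib sum_subtractf)

lemma cinner_scale_left: "cinner (c *s x) z = c * cinner x z"
  by (simp add: cinner_def sum_distrib_left mult.assoc)

lemma cinner_scale_right: "cinner x (c *s z) = cnj c * cinner x z"
  by (simp add: cinner_def sum_distrib_left mult_ac)

lemma cinner_sum_left: "cinner (\<Sum>i\<in>A. x i) z = (\<Sum>i\<in>A. cinner (x i) z)"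
  by (simp add: cinner_def sum_distrib_right sum.swap[of _ A])

lemma cinner_commute: "cinner y x = cnj (cinner x y)"
  by (simp add: cinner_def mult.commute)

lemma scale_of_real_eq_scaleR: "complex_of_real r *s x = r *\<^sub>R (x::complex^'n)"
  by (simp add: scaleR_vec_def vec_eq_iff scaleR_conv_of_real)

lemma cinner_scaleR_left: "cinner (r *\<^sub>R x) y = of_real r * cinner x y"
  by (metis scale_of_real_eq_scaleR cinner_scale_left)

lemma cinner_scaleR_right: "cinner x (r *\<^sub>R y) = of_real r * cinner x y"
  by (metis scale_of_real_eq_scaleR cinner_scale_right complex_cnj_complex_of_real)

lemma norm_vec_power2: "(norm (x::complex^'n))\<^sup>2 = (\<Sum>k\<in>UNIV. (cmod (x$k))\<^sup>2)"
  by (simp add: norm_vec_def L2_set_def sum_nonneg)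

lemma cinner_self: "cinner x x = of_real ((norm x)\<^sup>2)"
  by (simp add: cinner_def norm_vec_power2 complex_norm_square[symmetric])

lemma cinner_axis: "cinner (axis k 1) x = cnj (x$k)"
  by (simp add: cinner_def axis_def if_distrib[of "\<lambda>x. x * _"] cong: if_cong)

lemma norm_add_power2_cinner:
  "(norm (x + y::complex^'n))\<^sup>2 = (norm x)\<^sup>2 + 2 * Re (cinner x y) + (norm y)\<^sup>2"
proof -
  have "complex_of_real ((norm (x + y))\<^sup>2) = cinner x x + cinner x y + cinner y x + cinner y y"
    by (simp only: cinner_self[symmetric] cinner_add_left cinner_add_right add_ac)
  then have "(norm (x + y))\<^sup>2 = Re (cinner x x + cinner x y + cinner y x + cinner y y)"
    by (metis Re_complex_of_real)
  then show ?thesis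
    by (simp add: cinner_self cinner_commute[of x y])
qed

text \<open>Polarization: over \<complex> an operator is determined by its quadratic form.\<close>
lemma eq_0_if_cinner_apply_self_eq_0:
  fixes T :: "complex^'n \<Rightarrow> complex^'n"
  assumes add: "\<And>x y. T (x + y) = T x + T y" and scale: "\<And>c x. T (c *s x) = c *s T x"
    and quadratic_0: "\<And>f. cinner (T f) f = 0"
  shows "T f = 0"
proof -
  have "cinner (T f) g = 0" for g
  proof -
    have real_part: "cinner (T g) f = - cinner (T f) g"
      using quadratic_0[of "f + g"] quadratic_0[of f] quadratic_0[of g]
      by (simp add: add cinner_add_left cinner_add_right eq_neg_iff_add_eq_0 add.commute)
    have "- \<i> * cinner (T f) g + \<i> * cinner (T g) f = 0"
      using quadratic_0[of "f + \<i> *s g"] quadratic_0[of f] quadratic_0[of g]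
      by (simp add: add scale cinner_add_left cinner_add_right cinner_scale_left
          cinner_scale_right algebra_simps)
    with real_part have "(-2 * \<i>) * cinner (T f) g = 0"
      by (simp add: algebra_simps)
    then show ?thesis by simp
  qed
  from this[of "T f"] show ?thesis
    by (simp add: cinner_self)
qed

lemma frame_op_add: "frame_op F (x + y) = frame_op F x + frame_op F y"
  by (simp add: frame_op_def cinner_add_left vector_sadd_rdistrib sum.distrib)

lemma frame_op_scale: "frame_op F (c *s x) = c *s frame_op F x"
  by (simp add: frame_op_def cinner_scale_left vec_eq_iff sum_component sum_distrib_left mult.assoc)

lemma cinner_frame_op_self:
  "cinner (frame_op F f) f = of_real (\<Sum>i\<in>UNIV. (cmod (cinner f (F i)))\<^sup>2)"
proof -
  have "cinner (frame_op F f) f = (\<Sum>i\<in>UNIV. cinner f (F i) * cnj (cinner f (F i)))"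
    by (simp add: frame_op_def cinner_sum_left cinner_scale_left cinner_commute[of "F _" f])
  then show ?thesis
    by (simp add: complex_norm_square[symmetric])
qed

lemma frame_op_eq_scaleR_if_tight:
  assumes "\<And>f. (\<Sum>i\<in>UNIV. (cmod (cinner f (F i)))\<^sup>2) = A * (norm f)\<^sup>2"
  shows "frame_op F = scaleR A"
proof
  fix f
  define T where "T f = frame_op F f - complex_of_real A *s f" for f
  have "T f = 0"
  proof (rule eq_0_if_cinner_apply_self_eq_0[of T])
    show "T (x + y) = T x + T y" for x y
      by (simp add: T_def frame_op_add vector_sadd_rdistrib vector_add_ldistrib algebra_simps)
    show "T (c *s x) = c *s T x" for c x
      by (simp add: T_def frame_op_scale vector_ssub_ldistrib vector_smult_assoc mult.commute)
    show "cinner (T f) f = 0" for f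
      by (simp add: T_def cinner_diff_left cinner_frame_op_self assms cinner_scale_left cinner_self)
  qed
  then show "frame_op F f = A *\<^sub>R f"
    by (simp add: T_def scale_of_real_eq_scaleR)
qed

lemma tight_frameE:
  assumes "tight_frame F"
  obtains A where "0 < A" "frame_op F = scaleR A" "is_frame F"
proof -
  obtain A where A: "0 < A" "\<And>f. (\<Sum>i\<in>UNIV. (cmod (cinner f (F i)))\<^sup>2) = A * (norm f)\<^sup>2"
    using assms unfolding tight_frame_def by blast
  then have "is_frame F"
    unfolding is_frame_def by (intro exI[of _ A]) auto
  with A show thesis
    using frame_op_eq_scaleR_if_tight that by blast
qed

lemma canonical_dual_eq_if_frame_op_scaleR:
  assumes "0 < A" "frame_op F = scaleR A"
  shows "canonical_dual F = (\<lambda>i. inverse A *\<^sub>R F i)"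
proof -
  have "inj (frame_op F)"
    using assms by (intro injI) simp
  moreover have "frame_op F (inverse A *\<^sub>R F i) = F i" for i
    using assms by simp
  ultimately show ?thesis
    unfolding canonical_dual_def by (metis inv_f_f)
qed

lemma is_dual_canonical_dual_if_frame_op_scaleR:
  assumes "0 < A" "frame_op F = scaleR A"
  shows "is_dual F (canonical_dual F)"
  unfolding is_dual_def
proof
  fix f
  have "(\<Sum>i\<in>UNIV. cinner f (canonical_dual F i) *s F i)
      = complex_of_real (inverse A) *s frame_op F f"
    unfolding canonical_dual_eq_if_frame_op_scaleR[OF assms] cinner_scaleR_right frame_op_def
    by (simp add: vec_eq_iff sum_component sum_distrib_left mult.assoc)
  with assms show "f = (\<Sum>i\<in>UNIV. cinner f (canonical_dual F i) *s F i)"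
    by (simp add: scale_of_real_eq_scaleR del: of_real_inverse)
qed

text \<open>The operator f \<mapsto> \<Sum>i \<langle>f,h_i\<rangle> f_i has trace \<Sum>i \<langle>f_i,h_i\<rangle>, read off on the standard basis.\<close>
lemma sum_cinner_eq_0_if_synthesis_eq_0:
  fixes F h :: "'i::finite \<Rightarrow> complex^'n"
  assumes "\<And>f. (\<Sum>i\<in>UNIV. cinner f (h i) *s F i) = 0"
  shows "(\<Sum>i\<in>UNIV. cinner (F i) (h i)) = 0"
proof -
  have diagonal: "(\<Sum>i\<in>UNIV. F i $ k * cnj (h i $ k)) = 0" for k
  proof -
    have "(\<Sum>i\<in>UNIV. cinner (axis k 1) (h i) *s F i) $ k = 0"
      using assms by simp
    then show ?thesis
      by (simp add: sum_component cinner_axis mult.commute)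
  qed
  have "(\<Sum>i\<in>UNIV. cinner (F i) (h i)) = (\<Sum>k\<in>UNIV. \<Sum>i\<in>UNIV. F i $ k * cnj (h i $ k))"
    unfolding cinner_def by (rule sum.swap)
  then show ?thesis
    by (simp add: diagonal)
qed

lemma sum_cinner_diff_duals_eq_0:
  assumes "is_dual F G" "is_dual F G'"
  shows "(\<Sum>i\<in>UNIV. cinner (F i) (G i - G' i)) = 0"
proof (rule sum_cinner_eq_0_if_synthesis_eq_0)
  fix f
  have "(\<Sum>i\<in>UNIV. cinner f (G i - G' i) *s F i)
      = (\<Sum>i\<in>UNIV. cinner f (G i) *s F i) - (\<Sum>i\<in>UNIV. cinner f (G' i) *s F i)"
    by (simp add: cinner_diff_right vector_sub_rdistrib sum_subtractf)
  also have "\<dots> = f - f"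
    using assms unfolding is_dual_def by metis
  finally show "(\<Sum>i\<in>UNIV. cinner f (G i - G' i) *s F i) = 0"
    by simp
qed

text \<open>For a tight frame the canonical dual has the least \<ell>^2 norm among all duals.\<close>
lemma sum_norm_power2_dual_eq:
  assumes "0 < A" "frame_op F = scaleR A" "is_dual F G"
  defines "Gc \<equiv> canonical_dual F"
  shows "(\<Sum>i\<in>UNIV. (norm (G i))\<^sup>2)
    = (\<Sum>i\<in>UNIV. (norm (Gc i))\<^sup>2) + (\<Sum>i\<in>UNIV. (norm (G i - Gc i))\<^sup>2)"
proof -
  have Gc: "Gc i = inverse A *\<^sub>R F i" for i
    by (simp add: Gc_def canonical_dual_eq_if_frame_op_scaleR[OF assms(1,2)])
  have "(\<Sum>i\<in>UNIV. cinner (Gc i) (G i - Gc i))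
      = of_real (inverse A) * (\<Sum>i\<in>UNIV. cinner (F i) (G i - Gc i))"
    by (simp add: Gc cinner_scaleR_left sum_distrib_left)
  also have "\<dots> = 0"
    using sum_cinner_diff_duals_eq_0[OF assms(3) is_dual_canonical_dual_if_frame_op_scaleR[OF assms(1,2)]]
    by (simp add: Gc_def)
  finally have cross_term: "(\<Sum>i\<in>UNIV. Re (cinner (Gc i) (G i - Gc i))) = 0"
    by (metis Re_sum zero_complex.sel(1))
  have "(\<Sum>i\<in>UNIV. (norm (G i))\<^sup>2) = (\<Sum>i\<in>UNIV. (norm (Gc i + (G i - Gc i)))\<^sup>2)"
    by simp
  also have "\<dots> = (\<Sum>i\<in>UNIV. (norm (Gc i))\<^sup>2 + 2 * Re (cinner (Gc i) (G i - Gc i))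
      + (norm (G i - Gc i))\<^sup>2)"
    by (simp only: norm_add_power2_cinner)
  finally show ?thesis
    by (simp add: sum.distrib sum_distrib_left[symmetric] cross_term)
qed

lemma dual_eq_canonical_dual_if_norm_le:
  assumes "0 < A" "frame_op F = scaleR A" "is_dual F G"
    and norm_le: "\<And>i. norm (G i) \<le> norm (canonical_dual F i)"
  shows "G = canonical_dual F"
proof -
  have "(\<Sum>i\<in>UNIV. (norm (G i))\<^sup>2) \<le> (\<Sum>i\<in>UNIV. (norm (canonical_dual F i))\<^sup>2)"
    by (intro sum_mono power_mono norm_le) simp
  then have "(\<Sum>i\<in>UNIV. (norm (G i - canonical_dual F i))\<^sup>2) = 0"
    using sum_norm_power2_dual_eq[OF assms(1-3)] by (simp add: antisym sum_nonneg)
  then show ?thesis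
    by (simp add: fun_eq_iff sum_nonneg_eq_0_iff)
qed

lemma tight_frame_ex_nonzero:
  assumes "tight_frame F"
  shows "\<exists>i. F i \<noteq> 0"
proof (rule ccontr)
  assume "\<not> (\<exists>i. F i \<noteq> 0)"
  then have "frame_op F = (\<lambda>_. 0)"
    by (simp add: frame_op_def fun_eq_iff)
  moreover obtain A where "0 < A" "frame_op F = scaleR A"
    using assms by (rule tight_frameE)
  ultimately show False
    by (metis axis_eq_0_iff scaleR_eq_0_iff zero_neq_one less_irrefl)
qed

lemma frob_norm_error_op_singleton: "frob_norm (error_op {i} F G) = norm (F i) * norm (G i)"
proof -
  have matrix_entry: "matrix (error_op {i} F G) $ a $ b = cnj (F i $ b) * G i $ a" for a b
    by (simp add: matrix_def error_op_def cinner_axis)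
  have "trace (cadj (matrix (error_op {i} F G)) ** matrix (error_op {i} F G))
      = (\<Sum>b\<in>UNIV. \<Sum>a\<in>UNIV. of_real ((cmod (F i $ b))\<^sup>2 * (cmod (G i $ a))\<^sup>2))"
    unfolding trace_def matrix_matrix_mult_def cadj_def
    by (simp add: matrix_entry) (intro sum.cong refl; simp add: complex_norm_square[unfolded of_real_power] mult_ac)
  also have "\<dots> = of_real ((norm (F i))\<^sup>2 * (norm (G i))\<^sup>2)"
    by (simp only: norm_vec_power2 sum_distrib_left sum_distrib_right of_real_sum) (rule sum.swap)
  finally show ?thesis
    by (simp add: frob_norm_def real_sqrt_mult)
qed

lemma eps1_eq_Max: "eps1 F G = Max (range (\<lambda>i. norm (F i) * norm (G i)))"
  by (simp add: eps1_def frob_norm_error_op_singleton)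

lemma norm_mult_le_eps1: "norm (F i) * norm (G i) \<le> eps1 F G"
  unfolding eps1_eq_Max by (rule Max_ge) auto

lemma eps1_eq_if_norm_mult_const:
  assumes "\<And>i. norm (F i) * norm (G i) = c"
  shows "eps1 F G = c"
proof -
  have "range (\<lambda>i. norm (F i) * norm (G i)) = {c}"
    using assms by auto
  then show ?thesis
    by (simp add: eps1_eq_Max)
qed

lemma eps1_opt_le:
  fixes F G :: "'i::finite \<Rightarrow> complex^'n"
  assumes "dual_pair F G"
  shows "eps1_opt TYPE('i) TYPE('n) \<le> eps1 F G"
  unfolding eps1_opt_def
proof (rule cInf_lower)
  show "eps1 F G \<in> {eps1 F G |(F :: 'i \<Rightarrow> complex^'n) G. dual_pair F G}"
    using assms by blast
  have "0 \<le> eps1 F' G'" for F' G' :: "'i \<Rightarrow> complex^'n"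
    using norm_mult_le_eps1[of F' undefined G'] by (meson mult_nonneg_nonneg norm_ge_zero order_trans)
  then show "bdd_below {eps1 F G |(F :: 'i \<Rightarrow> complex^'n) G. dual_pair F G}"
    by (auto intro: bdd_belowI[of _ 0])
qed

theorem corollary3p5:
  fixes F G :: "'i::finite \<Rightarrow> complex^'n"
  assumes "equal_norm F" and "tight_frame F" and "is_dual F G" and "in_F1 F G"
  shows "G = canonical_dual F"
proof -
  obtain A where A: "0 < A" "frame_op F = scaleR A" and frame: "is_frame F"
    using assms(2) by (rule tight_frameE)
  obtain i0 where "F i0 \<noteq> 0"
    using tight_frame_ex_nonzero[OF assms(2)] by blast
  define d where "d = norm (F i0)"
  have d_pos: "0 < d"
    using \<open>F i0 \<noteq> 0\<close> by (simp add: d_def)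
  have norm_F: "norm (F i) = d" for i
    using assms(1) unfolding equal_norm_def d_def by metis
  have norm_Gc: "norm (canonical_dual F i) = d / A" for i
    using A by (simp add: canonical_dual_eq_if_frame_op_scaleR norm_F field_simps)
  have "eps1 F G \<le> eps1 F (canonical_dual F)"
    using assms(4) eps1_opt_le frame is_dual_canonical_dual_if_frame_op_scaleR[OF A]
    unfolding in_F1_def dual_pair_def by metis
  also have "\<dots> = d * (d / A)"
    by (rule eps1_eq_if_norm_mult_const) (simp add: norm_F norm_Gc)
  finally have "d * norm (G i) \<le> d * (d / A)" for i
    using norm_mult_le_eps1[of F i G] by (simp add: norm_F)
  then have "norm (G i) \<le> norm (canonical_dual F i)" for i
    using d_pos by (metis norm_Gc mult_le_cancel_left_pos)
  then show ?thesis
    by (rule dual_eq_canonical_dual_if_norm_le[OF A assms(3)])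
qed

end
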